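(* For any two infinite cardinals $p\ge q$, the generalized Baer--Levi semigroup $B(p,q)$ is not DSC.
   Context: Let $X$ be a set of cardinality $p$. $B(p,q)=\{f\colon X\to X \mid f\text{ injective and } |X\setminus Xf|=q\}$ (where $Xf$ is the image of $f$), a semigroup under composition of functions. For a semigroup $T$, a diagonal subsemigroup of $T\times T$ is a subsemigroup containing $\{(t,t)\colon t\in T\}$; a congruence is a symmetric and transitive diagonal subsemigroup; $T$ is DSC if every diagonal subsemigroup of $T\times T$ is a congruence on $T$. *)

theory Defs
  imports Main "HOL-Library.FuncSet" "HOL-Library.Equipollence"
begin

text \<open>Generalized Baer--Levi semigroup B(p,q) on a set X with |X| = p, where q is
  represented as the cardinality of a set Q: injective maps f : X -> X
  (extensional, i.e. undefined outside X) with X - f`X equipotent to Q.\<close>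
definition BL :: "'a set \<Rightarrow> 'b set \<Rightarrow> ('a \<Rightarrow> 'a) set" where
  "BL X Q = {f \<in> X \<rightarrow>\<^sub>E X. inj_on f X \<and> (X - f ` X) \<approx> Q}"

text \<open>Product in B(p,q): maps act on the right, so f g means first f, then g.\<close>
definition BL_mult :: "'a set \<Rightarrow> ('a \<Rightarrow> 'a) \<Rightarrow> ('a \<Rightarrow> 'a) \<Rightarrow> ('a \<Rightarrow> 'a)" where
  "BL_mult X f g = compose X g f"

definition diagonal_subsemigroup :: "'s set \<Rightarrow> ('s \<Rightarrow> 's \<Rightarrow> 's) \<Rightarrow> ('s \<times> 's) set \<Rightarrow> bool" where
  "diagonal_subsemigroup S mult R \<longleftrightarrow>
     R \<subseteq> S \<times> S \<and>
     (\<forall>a b c d. (a, b) \<in> R \<longrightarrow> (c, d) \<in> R \<longrightarrow> (mult a c, mult b d) \<in> R) \<and>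
     (\<forall>t\<in>S. (t, t) \<in> R)"

definition semigroup_congruence :: "'s set \<Rightarrow> ('s \<Rightarrow> 's \<Rightarrow> 's) \<Rightarrow> ('s \<times> 's) set \<Rightarrow> bool" where
  "semigroup_congruence S mult R \<longleftrightarrow>
     diagonal_subsemigroup S mult R \<and> sym R \<and> trans R"

definition DSC :: "'s set \<Rightarrow> ('s \<Rightarrow> 's \<Rightarrow> 's) \<Rightarrow> bool" where
  "DSC S mult \<longleftrightarrow>
     (\<forall>R. diagonal_subsemigroup S mult R \<longrightarrow> semigroup_congruence S mult R)"

end

theory Submission
  imports Defs
begin

text \<open>Fix x0 and relate f to g when f and g miss a common point of X, or when f misses x0.
  Since the image of a product lies in the image of its right factor, and every element of
  B(p,q) misses some point, this relation is a diagonal subsemigroup. It is not symmetric: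
  as X is equipotent to \<nat> \<times> X, there are a and b in B(p,q) whose defects X - a`X and
  X - b`X are disjoint; with x0 in the defect of a, a is related to b but not conversely.\<close>

unbundle cardinal_syntax

abbreviation defect :: "'a set \<Rightarrow> ('a \<Rightarrow> 'a) \<Rightarrow> 'a set" where
  "defect X f \<equiv> X - f ` X"

lemma Un_eqpoll_infinite:
  assumes "infinite Q" "A \<approx> Q" "B \<approx> Q"
  shows "A \<union> B \<approx> Q"
proof (rule lepoll_antisym)
  have "|A \<union> B| \<le>o |A <+> B|" by (rule card_of_Un_Plus_ordLeq)
  then have "A \<union> B \<lesssim> A <+> B" by (metis card_of_ordLeq lepoll_def)
  also have "A <+> B \<approx> Q <+> Q" using assms by (simp add: sum_eqpoll_cong)
  also have "Q <+> Q \<approx> Q"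
    using card_of_Plus_infinite1[OF assms(1) card_of_mono1[OF subset_refl]]
    by (simp add: eqpoll_iff_card_of_ordIso)
  finally show "A \<union> B \<lesssim> Q" .
  have "Q \<lesssim> A" using assms(2) eqpoll_sym eqpoll_imp_lepoll by blast
  then show "Q \<lesssim> A \<union> B" by (meson lepoll_trans subset_imp_lepoll sup_ge1)
qed

lemma nat_times_eqpoll_infinite:
  assumes "infinite X"
  shows "(UNIV :: nat set) \<times> X \<approx> X"
proof (rule lepoll_antisym)
  have "(UNIV :: nat set) \<times> X \<lesssim> X \<times> X"
    using assms by (simp add: infinite_le_lepoll times_lepoll_mono)
  also have "X \<times> X \<approx> X"
    using assms card_of_Times_same_infinite eqpoll_iff_card_of_ordIso by blast
  finally show "(UNIV :: nat set) \<times> X \<lesssim> X" .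
  show "X \<lesssim> (UNIV :: nat set) \<times> X"
    unfolding lepoll_def by (rule exI[of _ "\<lambda>x. (0, x)"]) (auto simp: inj_on_def)
qed

lemma disjoint_eqpoll_subsets_with_large_complements:
  assumes "infinite X" "Q \<lesssim> X"
  obtains D1 D2 where "D1 \<subseteq> X" "D2 \<subseteq> X" "D1 \<approx> Q" "D2 \<approx> Q" "D1 \<inter> D2 = {}"
    "X - D1 \<approx> X" "X - D2 \<approx> X"
proof -
  let ?T = "(UNIV :: nat set) \<times> X"
  obtain h where h: "bij_betw h ?T X"
    using nat_times_eqpoll_infinite[OF assms(1)] by (auto simp: eqpoll_def)
  then have h_inj: "inj_on h ?T" and h_onto: "h ` ?T = X" by (auto simp: bij_betw_def)
  obtain Q' where Q': "Q' \<subseteq> X" "Q' \<approx> Q"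
    using assms(2) by (metis eqpoll_sym inj_on_image_eqpoll_self lepoll_def)
  define D where "D k = h ` ({k} \<times> Q')" for k :: nat
  have D_sub: "D k \<subseteq> X" for k using Q'(1) h_onto by (auto simp: D_def)
  have D_eqpoll: "D k \<approx> Q" for k
  proof -
    have "D k \<approx> {k} \<times> Q'"
      unfolding D_def
      by (rule inj_on_image_eqpoll_self[OF inj_on_subset[OF h_inj]]) (use Q'(1) in auto)
    also have "{k} \<times> Q' \<approx> Q'" by (rule times_singleton_eqpoll)
    finally show ?thesis using Q'(2) by (rule eqpoll_trans)
  qed
  have slices_disjoint: "h ` ({j} \<times> X) \<inter> h ` ({k} \<times> X) = {}" if "j \<noteq> k" for j k
    using that h_inj by (auto simp: inj_on_eq_iff)
  have D_slice: "D k \<subseteq> h ` ({k} \<times> X)" for k using Q'(1) by (auto simp: D_def)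
  have complement_eqpoll: "X - D k \<approx> X" if "k \<noteq> 2" for k
  proof (rule lepoll_antisym)
    show "X - D k \<lesssim> X" by (simp add: subset_imp_lepoll)
    have "X \<approx> {2::nat} \<times> X" by (rule eqpoll_sym, rule times_singleton_eqpoll)
    also have "{2::nat} \<times> X \<approx> h ` ({2} \<times> X)"
      by (rule eqpoll_sym, rule inj_on_image_eqpoll_self[OF inj_on_subset[OF h_inj]]) auto
    also have "h ` ({2} \<times> X) \<lesssim> X - D k"
    proof (rule subset_imp_lepoll)
      have "h ` ({2} \<times> X) \<inter> D k = {}"
        using slices_disjoint[of 2 k] D_slice[of k] that by fastforce
      then show "h ` ({2} \<times> X) \<subseteq> X - D k" using h_onto by auto
    qed
    finally show "X \<lesssim> X - D k" .
  qed
  have "D 0 \<inter> D 1 = {}" using slices_disjoint[of 0 1] D_slice[of 0] D_slice[of 1] by auto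
  then show thesis
    using that[OF D_sub D_sub D_eqpoll D_eqpoll] complement_eqpoll[of 0] complement_eqpoll[of 1]
    by simp
qed

lemma exists_inj_on_with_image_complement:
  assumes "D \<subseteq> X" "X - D \<approx> X"
  obtains f where "f \<in> X \<rightarrow>\<^sub>E X" "inj_on f X" "defect X f = D"
proof -
  obtain g where g: "bij_betw g X (X - D)" using assms(2) eqpoll_sym by (auto simp: eqpoll_def)
  show thesis
  proof
    show "restrict g X \<in> X \<rightarrow>\<^sub>E X" using g by (auto simp: bij_betw_def)
    show "inj_on (restrict g X) X" using g by (simp add: bij_betw_def inj_on_def)
    show "defect X (restrict g X) = D" using g assms(1) by (auto simp: bij_betw_def)
  qed
qed

lemma BL_pair_with_disjoint_defects:
  assumes "infinite Q" "Q \<lesssim> X"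
  obtains a b where "a \<in> BL X Q" "b \<in> BL X Q" "defect X a \<inter> defect X b = {}"
proof -
  have "infinite X"
    using assms lepoll_trans[of "UNIV :: nat set" Q X] by (simp add: infinite_le_lepoll)
  then obtain D1 D2 where D: "D1 \<subseteq> X" "D2 \<subseteq> X" "D1 \<approx> Q" "D2 \<approx> Q" "D1 \<inter> D2 = {}"
    "X - D1 \<approx> X" "X - D2 \<approx> X"
    by (rule disjoint_eqpoll_subsets_with_large_complements[OF _ assms(2)])
  obtain a where a: "a \<in> X \<rightarrow>\<^sub>E X" "inj_on a X" "defect X a = D1"
    by (rule exists_inj_on_with_image_complement[OF D(1,6)])
  obtain b where b: "b \<in> X \<rightarrow>\<^sub>E X" "inj_on b X" "defect X b = D2"
    by (rule exists_inj_on_with_image_complement[OF D(2,7)])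
  show thesis
  proof (rule that)
    show "a \<in> BL X Q" using a D(3) by (simp add: BL_def)
    show "b \<in> BL X Q" using b D(4) by (simp add: BL_def)
    show "defect X a \<inter> defect X b = {}" using a b D(5) by simp
  qed
qed

lemma BL_defect_nonempty:
  assumes "infinite Q" "f \<in> BL X Q"
  shows "defect X f \<noteq> {}"
  using assms eqpoll_finite_iff by (fastforce simp: BL_def)

lemma image_BL_mult_subset:
  assumes "f ` X \<subseteq> X"
  shows "BL_mult X f g ` X \<subseteq> g ` X"
  using assms by (auto simp: BL_mult_def compose_def)

lemma BL_mult_closed:
  assumes "infinite Q" "f \<in> BL X Q" "g \<in> BL X Q"
  shows "BL_mult X f g \<in> BL X Q"
proof -
  have f: "f \<in> X \<rightarrow>\<^sub>E X" "inj_on f X" "defect X f \<approx> Q"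
   and g: "g \<in> X \<rightarrow>\<^sub>E X" "inj_on g X" "defect X g \<approx> Q"
    using assms by (auto simp: BL_def)
  have fX: "f ` X \<subseteq> X" and gX: "g ` X \<subseteq> X" using f(1) g(1) by auto
  have "defect X (BL_mult X f g) = defect X g \<union> (g ` X - g ` f ` X)"
    using fX gX by (auto simp: BL_mult_def compose_def)
  also have "g ` X - g ` f ` X = g ` defect X f"
    by (rule inj_on_image_set_diff[OF g(2) Diff_subset fX, symmetric])
  finally have "defect X (BL_mult X f g) = defect X g \<union> g ` defect X f" .
  moreover have "g ` defect X f \<approx> Q"
    using inj_on_image_eqpoll_self[OF inj_on_subset[OF g(2) Diff_subset]] f(3)
    by (rule eqpoll_trans)
  moreover have "BL_mult X f g \<in> X \<rightarrow>\<^sub>E X"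
    using f(1) g(1) by (auto simp: BL_mult_def compose_def)
  moreover have "inj_on (BL_mult X f g) X"
    using f(2) g(2) fX unfolding BL_mult_def compose_def inj_on_def by (simp add: image_subset_iff)
  ultimately show ?thesis using Un_eqpoll_infinite[OF assms(1) g(3)] by (simp add: BL_def)
qed

definition shared_defect_rel :: "'a set \<Rightarrow> 'b set \<Rightarrow> 'a \<Rightarrow> (('a \<Rightarrow> 'a) \<times> ('a \<Rightarrow> 'a)) set" where
  "shared_defect_rel X Q x0 =
     {(f, g). f \<in> BL X Q \<and> g \<in> BL X Q \<and> (defect X f \<inter> defect X g \<noteq> {} \<or> x0 \<notin> f ` X)}"

lemma diagonal_subsemigroup_shared_defect_rel:
  assumes "infinite Q"
  shows "diagonal_subsemigroup (BL X Q) (BL_mult X) (shared_defect_rel X Q x0)"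
  unfolding diagonal_subsemigroup_def
proof (intro conjI allI impI ballI)
  show "shared_defect_rel X Q x0 \<subseteq> BL X Q \<times> BL X Q" by (auto simp: shared_defect_rel_def)
next
  fix f assume f: "f \<in> BL X Q"
  then have "defect X f \<inter> defect X f \<noteq> {}" using BL_defect_nonempty[OF assms] by simp
  with f show "(f, f) \<in> shared_defect_rel X Q x0" by (simp add: shared_defect_rel_def)
next
  fix f g f' g'
  assume "(f, g) \<in> shared_defect_rel X Q x0" "(f', g') \<in> shared_defect_rel X Q x0"
  then have BL: "f \<in> BL X Q" "g \<in> BL X Q" "f' \<in> BL X Q" "g' \<in> BL X Q"
    and rel: "defect X f' \<inter> defect X g' \<noteq> {} \<or> x0 \<notin> f' ` X"
    by (auto simp: shared_defect_rel_def)
  have "BL_mult X f f' ` X \<subseteq> f' ` X" "BL_mult X g g' ` X \<subseteq> g' ` X"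
    using BL(1,2) by (auto simp: BL_def intro!: image_BL_mult_subset)
  then have "defect X (BL_mult X f f') \<inter> defect X (BL_mult X g g') \<noteq> {}
             \<or> x0 \<notin> BL_mult X f f' ` X"
    using rel by blast
  then show "(BL_mult X f f', BL_mult X g g') \<in> shared_defect_rel X Q x0"
    using BL_mult_closed[OF assms BL(1,3)] BL_mult_closed[OF assms BL(2,4)]
    by (simp add: shared_defect_rel_def)
qed

theorem mainTheorem12:
  fixes X :: "'a set" and Q :: "'b set"
  assumes "infinite Q" and "Q \<lesssim> X"
  shows "\<not> DSC (BL X Q) (BL_mult X)"
proof
  assume "DSC (BL X Q) (BL_mult X)"
  obtain a b where ab: "a \<in> BL X Q" "b \<in> BL X Q" "defect X a \<inter> defect X b = {}"
    by (rule BL_pair_with_disjoint_defects[OF assms])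
  obtain x0 where x0: "x0 \<in> defect X a" using BL_defect_nonempty[OF assms(1) ab(1)] by blast
  let ?R = "shared_defect_rel X Q x0"
  have "semigroup_congruence (BL X Q) (BL_mult X) ?R"
    using \<open>DSC (BL X Q) (BL_mult X)\<close> diagonal_subsemigroup_shared_defect_rel[OF assms(1)]
    unfolding DSC_def by (elim allE impE)
  then have "sym ?R" by (simp add: semigroup_congruence_def)
  moreover have "(a, b) \<in> ?R" using ab x0 by (simp add: shared_defect_rel_def)
  moreover have "(b, a) \<notin> ?R" using ab x0 by (auto simp: shared_defect_rel_def)
  ultimately show False by (meson symD)
qed

end
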